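(* $\mathfrak{b}\leq\mathfrak{s}(\mathbb{R})$.
   Context: $\mathfrak{b}$ is the bounding number: the smallest cardinality of a family of functions $\omega\to\omega$ not bounded by a single function modulo finite (i.e. no $f$ with $g<^*f$ for all members $g$, where $g<^*f$ means $g(n)<f(n)$ for all but finitely many $n$). For infinite sets $U, A$, say $U$ splits $A$ if both $A\cap U$ and $A\setminus U$ are infinite. $\mathfrak{s}(\mathbb{R})$ is the smallest cardinality of a family $\mathcal{U}$ of open subsets of $\mathbb{R}$ (usual topology) such that every infinite $A\subseteq\mathbb{R}$ is split by some $U\in\mathcal{U}$. *)

theory Defs
  imports "HOL-Analysis.Analysis"
begin

definition less_star :: "(nat \<Rightarrow> nat) \<Rightarrow> (nat \<Rightarrow> nat) \<Rightarrow> bool" where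
  "less_star g f \<longleftrightarrow> finite {n. \<not> g n < f n}"

definition unbounded_family :: "(nat \<Rightarrow> nat) set \<Rightarrow> bool" where
  "unbounded_family F \<longleftrightarrow> \<not> (\<exists>f. \<forall>g\<in>F. less_star g f)"

definition splits :: "'a set \<Rightarrow> 'a set \<Rightarrow> bool" where
  "splits U A \<longleftrightarrow> infinite (A \<inter> U) \<and> infinite (A - U)"

definition splitting_open_family :: "real set set \<Rightarrow> bool" where
  "splitting_open_family \<U> \<longleftrightarrow>
     (\<forall>U\<in>\<U>. open U) \<and> (\<forall>A::real set. infinite A \<longrightarrow> (\<exists>U\<in>\<U>. splits U A))"

end

theory Submission
  imports Defs
begin

text \<open>
  For an open set U and a point x of U, the points x + 1/(k+1) lie in U for all k beyond some
  least index g_U(x). The points reachable from 0 by at most m such steps with k \<le> m form a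
  finite set Q_m, and F_U(m) bounds g_U on Q_m \<inter> U. If a single f eventually dominated every
  F_U, build x_0 = 0 and x_(i+1) = x_i + 1/(f(M_i)+1), where M_i \<ge> i is an index with
  x_i \<in> Q_(M_i). Then for every U in the family, eventually x_i \<in> U forces x_(i+1) \<in> U,
  so the infinite set {x_i} is eventually inside U or eventually outside U: U does not split it.
  Hence U \<mapsto> F_U maps the splitting family onto an unbounded family.
\<close>

lemma not_splits_range_if_eventually_closed:
  assumes "eventually (\<lambda>i. x i \<in> U \<longrightarrow> x (Suc i) \<in> U) sequentially"
  shows "\<not> splits U (range x)"
proof -
  obtain N where N: "\<And>i. i \<ge> N \<Longrightarrow> x i \<in> U \<Longrightarrow> x (Suc i) \<in> U"
    using assms by (auto simp: eventually_sequentially)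
  show ?thesis
  proof (cases "\<exists>i\<ge>N. x i \<in> U")
    case True
    then obtain i0 where i0: "i0 \<ge> N" "x i0 \<in> U" by blast
    have "x j \<in> U" if "j \<ge> i0" for j
      using that
    proof (induction j rule: dec_induct)
      case base
      show ?case using i0 by simp
    next
      case (step j)
      then show ?case using N i0 by simp
    qed
    then have "range x - U \<subseteq> x ` {..<i0}"
      by (auto simp: image_iff) (metis lessThan_iff not_le)
    then have "finite (range x - U)" by (rule finite_subset) simp
    then show ?thesis unfolding splits_def by blast
  next
    case False
    then have "range x \<inter> U \<subseteq> x ` {..<N}"
      by (auto simp: image_iff) (metis lessThan_iff not_le)
    then have "finite (range x \<inter> U)" by (rule finite_subset) simp
    then show ?thesis unfolding splits_def by blast
  qed
qed

lemma less_star_iff_eventually: "less_star g f \<longleftrightarrow> eventually (\<lambda>n. g n < f n) sequentially"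
  by (simp add: less_star_def eventually_cofinite[symmetric] cofinite_eq_sequentially)

fun orbit_points :: "nat \<Rightarrow> real set" where
  "orbit_points 0 = {0}"
| "orbit_points (Suc m) =
     orbit_points m \<union> (\<lambda>(x, k). x + 1 / (real k + 1)) ` (orbit_points m \<times> {..Suc m})"

lemma finite_orbit_points: "finite (orbit_points m)"
  by (induction m) auto

lemma orbit_points_mono: "m \<le> n \<Longrightarrow> orbit_points m \<subseteq> orbit_points n"
  by (rule lift_Suc_mono_le[of orbit_points]) auto

lemma orbit_points_step:
  assumes "x \<in> orbit_points m" "k \<le> Suc m"
  shows "x + 1 / (real k + 1) \<in> orbit_points (Suc m)"
  using assms by force

definition entry_index :: "real set \<Rightarrow> real \<Rightarrow> nat" where
  "entry_index U x = (LEAST m. \<forall>k\<ge>m. x + 1 / (real k + 1) \<in> U)"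

lemma eventually_shift_mem_open:
  assumes "open U" "x \<in> U"
  shows "\<exists>m. \<forall>k\<ge>m. x + 1 / (real k + 1) \<in> U"
proof -
  have "(\<lambda>k. 1 / (real k + 1)) \<longlonglongrightarrow> 0"
    using LIMSEQ_inverse_real_of_nat by (simp add: inverse_eq_divide add.commute)
  then have "(\<lambda>k. x + 1 / (real k + 1)) \<longlonglongrightarrow> x + 0"
    by (intro tendsto_intros)
  then have "eventually (\<lambda>k. x + 1 / (real k + 1) \<in> U) sequentially"
    using assms by (simp add: topological_tendstoD)
  then show ?thesis by (simp add: eventually_sequentially)
qed

lemma shift_mem_if_entry_index_le:
  assumes "open U" "x \<in> U" "entry_index U x \<le> k"
  shows "x + 1 / (real k + 1) \<in> U"
proof -
  have "\<forall>k\<ge>entry_index U x. x + 1 / (real k + 1) \<in> U"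
    unfolding entry_index_def using eventually_shift_mem_open[OF assms(1,2)] by (rule LeastI_ex)
  then show ?thesis using assms(3) by blast
qed

definition entry_bound :: "real set \<Rightarrow> nat \<Rightarrow> nat" where
  "entry_bound U m = Max (insert 0 (entry_index U ` (orbit_points m \<inter> U)))"

lemma entry_index_le_entry_bound:
  "x \<in> orbit_points m \<Longrightarrow> x \<in> U \<Longrightarrow> entry_index U x \<le> entry_bound U m"
  unfolding entry_bound_def by (rule Max_ge) (auto simp: finite_orbit_points)

text \<open>The second component is the stage M_i of the orbit sets that contains the point.\<close>
primrec diagonal_seq :: "(nat \<Rightarrow> nat) \<Rightarrow> nat \<Rightarrow> real \<times> nat" where
  "diagonal_seq f 0 = (0, 0)"
| "diagonal_seq f (Suc i) =
     (let (x, M) = diagonal_seq f i in (x + 1 / (real (f M) + 1), max M (f M) + 1))"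

lemma diagonal_seq_in_orbit_points:
  "fst (diagonal_seq f i) \<in> orbit_points (snd (diagonal_seq f i)) \<and> i \<le> snd (diagonal_seq f i)"
proof (induction i)
  case 0
  show ?case by simp
next
  case (Suc i)
  obtain x M where xM: "diagonal_seq f i = (x, M)" by fastforce
  have "x \<in> orbit_points (max M (f M))"
    using Suc orbit_points_mono[of M "max M (f M)"] xM by auto
  then have "x + 1 / (real (f M) + 1) \<in> orbit_points (Suc (max M (f M)))"
    by (rule orbit_points_step) simp
  then show ?case using Suc xM by (simp add: le_max_iff_disj)
qed

lemma strict_mono_diagonal_seq: "strict_mono (\<lambda>i. fst (diagonal_seq f i))"
  by (rule strict_monoI_Suc) (simp add: case_prod_beta add_pos_pos)

lemma diagonal_seq_eventually_closed:
  assumes "open U" "less_star (entry_bound U) f"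
  shows "eventually (\<lambda>i. fst (diagonal_seq f i) \<in> U \<longrightarrow> fst (diagonal_seq f (Suc i)) \<in> U)
           sequentially"
proof -
  obtain N where N: "\<And>n. n \<ge> N \<Longrightarrow> entry_bound U n < f n"
    using assms(2) by (auto simp: less_star_iff_eventually eventually_sequentially)
  have "fst (diagonal_seq f (Suc i)) \<in> U" if "i \<ge> N" "fst (diagonal_seq f i) \<in> U" for i
  proof -
    obtain x M where xM: "diagonal_seq f i = (x, M)" by fastforce
    have "x \<in> orbit_points M" "i \<le> M"
      using diagonal_seq_in_orbit_points[of f i] xM by auto
    have "x \<in> U" using that(2) xM by simp
    have "entry_index U x \<le> entry_bound U M"
      using entry_index_le_entry_bound \<open>x \<in> orbit_points M\<close> \<open>x \<in> U\<close> by blast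
    also have "\<dots> < f M" using N \<open>i \<le> M\<close> \<open>i \<ge> N\<close> by simp
    finally have "x + 1 / (real (f M) + 1) \<in> U"
      using shift_mem_if_entry_index_le[OF assms(1) \<open>x \<in> U\<close>] by simp
    then show ?thesis using xM by simp
  qed
  then show ?thesis by (auto simp: eventually_sequentially)
qed

lemma unbounded_family_entry_bounds:
  assumes "splitting_open_family \<U>"
  shows "unbounded_family (entry_bound ` \<U>)"
  unfolding unbounded_family_def
proof
  assume "\<exists>f. \<forall>g\<in>entry_bound ` \<U>. less_star g f"
  then obtain f where f: "\<And>U. U \<in> \<U> \<Longrightarrow> less_star (entry_bound U) f" by blast
  let ?x = "\<lambda>i. fst (diagonal_seq f i)"
  have "infinite (range ?x)"
    using strict_mono_diagonal_seq strict_mono_imp_inj_on range_inj_infinite by blast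
  then obtain U where U: "U \<in> \<U>" "splits U (range ?x)"
    using assms unfolding splitting_open_family_def by blast
  then have "open U" using assms unfolding splitting_open_family_def by blast
  then have "eventually (\<lambda>i. ?x i \<in> U \<longrightarrow> ?x (Suc i) \<in> U) sequentially"
    using diagonal_seq_eventually_closed f[OF U(1)] by blast
  then show False using U(2) by (rule not_splits_range_if_eventually_closed[THEN notE])
qed

theorem theorem3p2:
  fixes \<U> :: "real set set"
  assumes "splitting_open_family \<U>"
  shows "\<exists>F :: (nat \<Rightarrow> nat) set. unbounded_family F \<and> (card_of F, card_of \<U>) \<in> ordLeq"
proof (intro exI conjI)
  show "unbounded_family (entry_bound ` \<U>)" using assms by (rule unbounded_family_entry_bounds)
  show "(card_of (entry_bound ` \<U>), card_of \<U>) \<in> ordLeq" by (rule card_of_image)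
qed

end
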